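(* Consider a finite two-player zero-sum Markov game $(S,A,B,p,r,\alpha)$ with discount factor $\alpha\in[0,1)$ and $R_{\max}=\max_{i,a,b}|r(i,a,b)|$. Let $(\theta_n)_{n\ge 0}$ be a real sequence with $0\le\theta_n\le 1$ and $\theta_n$ decreasing monotonically to $0$, and let step sizes $\beta_n(i,a,b)\in[0,1]$ be given, with $\bar\beta_n:=\max_{(i,a,b)}\beta_n(i,a,b)$ satisfying $\sum_{n}\bar\beta_n\theta_n<\infty$. Let $(Q_n)$ be generated by the two-step minimax Q-learning (TMQL) iteration described in the context, with $\|Q_0\|\le \frac{R_{\max}}{1-\alpha}$. Then for every $n\in\mathbb{N}$, $$\|Q_n\|\le \frac{R_{\max}}{1-\alpha}(1+\alpha\theta_0)\prod_{m=1}^{n-1}(1+\bar\beta_m\theta_m\alpha^2)\le M,\qquad M:=\frac{R_{\max}}{1-\alpha}(1+\alpha\theta_0)\prod_{m=1}^{\infty}(1+\bar\beta_m\theta_m\alpha^2)<\infty.$$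
   Context: A two-player zero-sum Markov game is $(S,A,B,p,r,\alpha)$ with finite state set $S$, finite action sets $A$ (player 1) and $B$ (player 2), transition probabilities $p(j\mid i,a,b)$, deterministic reward $r(i,a,b)\in\mathbb{R}$ to player 1 (player 2 receives $-r$), and discount $\alpha\in[0,1)$. Norms are max-norms: $\|z\|=\max_k|z(k)|$. For $Q\in\mathbb{R}^{S\times A\times B}$ and $i\in S$, $Q(i)$ denotes the $|A|\times|B|$ matrix $(Q(i,a,b))_{a,b}$, and for an $|A|\times|B|$ matrix $M$, $\mathrm{val}[M]:=\min_{y\in\Delta^{|B|}}\max_{x\in\Delta^{|A|}}x^{T}My$, where $\Delta^{m}$ is the probability simplex in $\mathbb{R}^m$. TMQL iteration: at each step $n$, a sample $(i,a,b,j,c,d,k)$ is generated, where $j\sim p(\cdot\mid i,a,b)$, actions $c\in A,d\in B$ are chosen at $j$, and $k\sim p(\cdot\mid j,c,d)$; then $Q_{n+1}(i,a,b)=(1-\beta_n(i,a,b))Q_n(i,a,b)+\beta_n(i,a,b)\big(r(i,a,b)+\alpha\,\mathrm{val}[Q_n(j)]+\alpha\theta_n(r(j,c,d)+\alpha\,\mathrm{val}[Q_n(k)])\big)$, and all other components are left unchanged ($Q_{n+1}(i',a',b')=Q_n(i',a',b')$ for $(i',a',b')\neq(i,a,b)$). *)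

theory Defs
  imports "HOL-Analysis.Analysis"
begin

definition strategies :: "('x::finite \<Rightarrow> real) set" where
  "strategies = {x. (\<forall>k. 0 \<le> x k) \<and> (\<Sum>k\<in>UNIV. x k) = 1}"

definition val :: "('a::finite \<Rightarrow> 'b::finite \<Rightarrow> real) \<Rightarrow> real" where
  "val M = (INF y\<in>strategies. SUP x\<in>strategies. \<Sum>a\<in>UNIV. \<Sum>b\<in>UNIV. x a * M a b * y b)"

definition qnorm :: "('s::finite \<Rightarrow> 'a::finite \<Rightarrow> 'b::finite \<Rightarrow> real) \<Rightarrow> real" where
  "qnorm Q = Max {\<bar>Q i a b\<bar> | i a b. True}"

definition Rmax :: "('s::finite \<Rightarrow> 'a::finite \<Rightarrow> 'b::finite \<Rightarrow> real) \<Rightarrow> real" where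
  "Rmax r = Max {\<bar>r i a b\<bar> | i a b. True}"

definition betabar :: "(nat \<Rightarrow> 's::finite \<Rightarrow> 'a::finite \<Rightarrow> 'b::finite \<Rightarrow> real) \<Rightarrow> nat \<Rightarrow> real" where
  "betabar \<beta> n = Max {\<beta> n i a b | i a b. True}"

definition tmql_step ::
  "('s::finite \<Rightarrow> 'a::finite \<Rightarrow> 'b::finite \<Rightarrow> real) \<Rightarrow> real \<Rightarrow>
   ('s \<Rightarrow> 'a \<Rightarrow> 'b \<Rightarrow> real) \<Rightarrow> ('s \<Rightarrow> 'a \<Rightarrow> 'b \<Rightarrow> real) \<Rightarrow> real \<Rightarrow>
   ('s \<times> 'a \<times> 'b \<times> 's \<times> 'a \<times> 'b \<times> 's) \<Rightarrow> ('s \<Rightarrow> 'a \<Rightarrow> 'b \<Rightarrow> real)" where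
  "tmql_step r \<alpha> \<beta> Q th smp =
     (case smp of (i, a, b, j, c, d, k) \<Rightarrow>
       (\<lambda>i' a' b'. if (i', a', b') = (i, a, b) then
          (1 - \<beta> i a b) * Q i a b
          + \<beta> i a b * (r i a b + \<alpha> * val (Q j)
                        + \<alpha> * th * (r j c d + \<alpha> * val (Q k)))
        else Q i' a' b'))"

end

theory Submission
  imports Defs
begin

text \<open>
  Matrix-game values are averages of matrix entries, so \<open>|val[Q j]| \<le> \<parallel>Q\<parallel>\<close>. Hence, writing
  \<open>C = R\<^sub>m\<^sub>a\<^sub>x / (1 - \<alpha>)\<close>, a TMQL update with \<open>\<parallel>Q\<^sub>n\<parallel> \<le> X\<close> is bounded by
  \<open>(1 - \<beta>) X + \<beta> (R\<^sub>m\<^sub>a\<^sub>x + \<alpha> X)(1 + \<alpha> \<theta>\<^sub>n)\<close>. Starting from \<open>X = C\<close>, where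
  \<open>R\<^sub>m\<^sub>a\<^sub>x + \<alpha> C = C\<close>, this gives \<open>C (1 + \<alpha> \<theta>\<^sub>0)\<close>; once \<open>X \<ge> C (1 + \<alpha> \<theta>\<^sub>0)\<close> the
  terms \<open>R\<^sub>m\<^sub>a\<^sub>x (1 + \<alpha> \<theta>\<^sub>n) - (1 - \<alpha>) X\<close> are non-positive and only the growth factor
  \<open>1 + \<beta>\<^sub>n \<theta>\<^sub>n \<alpha>\<^sup>2\<close> remains. Summability of \<open>\<beta>\<^sub>n \<theta>\<^sub>n\<close> makes the product of these
  factors converge.
\<close>

lemma abs_cSUP_le:
  fixes f :: "'a \<Rightarrow> real"
  assumes "A \<noteq> {}" and bound: "\<And>x. x \<in> A \<Longrightarrow> \<bar>f x\<bar> \<le> X"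
  shows "\<bar>SUP x\<in>A. f x\<bar> \<le> X"
proof -
  obtain x0 where x0: "x0 \<in> A" using assms(1) by blast
  have upper: "f x \<le> X" if "x \<in> A" for x
    using bound[OF that] by linarith
  then have bdd: "bdd_above (f ` A)"
    by (intro bdd_aboveI2[where M = X])
  from upper have "(SUP x\<in>A. f x) \<le> X"
    using assms(1) by (intro cSUP_least)
  moreover have "-X \<le> (SUP x\<in>A. f x)"
    using bound[OF x0] by (intro cSUP_upper2[OF bdd x0]) linarith
  ultimately show ?thesis by linarith
qed

lemma abs_cINF_le:
  fixes f :: "'a \<Rightarrow> real"
  assumes "A \<noteq> {}" and bound: "\<And>x. x \<in> A \<Longrightarrow> \<bar>f x\<bar> \<le> X"
  shows "\<bar>INF x\<in>A. f x\<bar> \<le> X"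
proof -
  obtain x0 where x0: "x0 \<in> A" using assms(1) by blast
  have lower: "-X \<le> f x" if "x \<in> A" for x
    using bound[OF that] by linarith
  then have bdd: "bdd_below (f ` A)"
    by (intro bdd_belowI2[where m = "-X"])
  from lower have "-X \<le> (INF x\<in>A. f x)"
    using assms(1) by (intro cINF_greatest)
  moreover have "(INF x\<in>A. f x) \<le> X"
    using bound[OF x0] by (intro cINF_lower2[OF bdd x0]) linarith
  ultimately show ?thesis by linarith
qed

lemma strategies_nonempty: "(strategies :: ('x::finite \<Rightarrow> real) set) \<noteq> {}"
proof -
  have "(\<lambda>_. 1 / real CARD('x)) \<in> (strategies :: ('x \<Rightarrow> real) set)"
    unfolding strategies_def by simp
  then show ?thesis by blast
qed

lemma bilinear_form_abs_le:
  fixes M :: "'a::finite \<Rightarrow> 'b::finite \<Rightarrow> real"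
  assumes M: "\<And>a b. \<bar>M a b\<bar> \<le> X" and x: "x \<in> strategies" and y: "y \<in> strategies"
  shows "\<bar>\<Sum>a\<in>UNIV. \<Sum>b\<in>UNIV. x a * M a b * y b\<bar> \<le> X"
proof -
  have x0: "\<And>a. 0 \<le> x a" and x1: "(\<Sum>a\<in>UNIV. x a) = 1"
    and y0: "\<And>b. 0 \<le> y b" and y1: "(\<Sum>b\<in>UNIV. y b) = 1"
    using x y unfolding strategies_def by auto
  have "\<bar>\<Sum>a\<in>UNIV. \<Sum>b\<in>UNIV. x a * M a b * y b\<bar> \<le> (\<Sum>a\<in>UNIV. \<Sum>b\<in>UNIV. \<bar>x a * M a b * y b\<bar>)"
    by (rule order_trans[OF sum_abs sum_mono]) (rule sum_abs)
  also have "\<dots> \<le> (\<Sum>a\<in>UNIV. \<Sum>b\<in>UNIV. x a * X * y b)"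
    by (intro sum_mono) (simp add: abs_mult x0 y0 mult_left_mono mult_right_mono M)
  also have "\<dots> = X"
    by (simp add: sum_distrib_left[symmetric] sum_distrib_right[symmetric] x1 y1 mult.commute)
  finally show ?thesis .
qed

lemma val_abs_le:
  fixes M :: "'a::finite \<Rightarrow> 'b::finite \<Rightarrow> real"
  assumes "\<And>a b. \<bar>M a b\<bar> \<le> X"
  shows "\<bar>val M\<bar> \<le> X"
  unfolding val_def
  by (intro abs_cINF_le abs_cSUP_le strategies_nonempty bilinear_form_abs_le assms)

lemma qnorm_le_iff:
  "qnorm (Q :: 's::finite \<Rightarrow> 'a::finite \<Rightarrow> 'b::finite \<Rightarrow> real) \<le> X \<longleftrightarrow> (\<forall>i a b. \<bar>Q i a b\<bar> \<le> X)"
proof -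
  have "{\<bar>Q i a b\<bar> | i a b. True} = (\<lambda>(i, a, b). \<bar>Q i a b\<bar>) ` UNIV"
    by (auto simp: image_def)
  then show ?thesis
    unfolding qnorm_def by (subst Max_le_iff) auto
qed

lemma abs_le_qnorm: "\<bar>Q i a b\<bar> \<le> qnorm (Q :: 's::finite \<Rightarrow> 'a::finite \<Rightarrow> 'b::finite \<Rightarrow> real)"
  using qnorm_le_iff[of Q "qnorm Q"] by blast

lemma Rmax_eq_qnorm: "Rmax r = qnorm r"
  unfolding Rmax_def qnorm_def ..

lemma Rmax_nonneg: "0 \<le> Rmax (r :: 's::finite \<Rightarrow> 'a::finite \<Rightarrow> 'b::finite \<Rightarrow> real)"
  unfolding Rmax_eq_qnorm by (rule order_trans[OF abs_ge_zero abs_le_qnorm])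

lemma le_betabar: "\<beta> n i a b \<le> betabar (\<beta> :: nat \<Rightarrow> 's::finite \<Rightarrow> 'a::finite \<Rightarrow> 'b::finite \<Rightarrow> real) n"
proof -
  have "{\<beta> n i a b | i a b. True} = (\<lambda>(i, a, b). \<beta> n i a b) ` UNIV"
    by (auto simp: image_def)
  then have "finite {\<beta> n i a b | i a b. True}"
    by simp
  then show ?thesis
    unfolding betabar_def by (rule Max_ge) blast
qed

lemma tmql_target_abs_le:
  fixes Q :: "'s::finite \<Rightarrow> 'a::finite \<Rightarrow> 'b::finite \<Rightarrow> real"
  assumes "qnorm Q \<le> X" and "0 \<le> \<alpha>" and "0 \<le> th"
  shows "\<bar>r i a b + \<alpha> * val (Q j) + \<alpha> * th * (r j c d + \<alpha> * val (Q k))\<bar>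
    \<le> (Rmax r + \<alpha> * X) * (1 + \<alpha> * th)"
proof -
  have game_value: "\<bar>\<alpha> * val (Q l)\<bar> \<le> \<alpha> * X" for l
    using assms(1,2) val_abs_le[of "Q l" X] mult_left_mono
    by (fastforce simp: abs_mult qnorm_le_iff)
  have reward: "\<bar>r l e f\<bar> \<le> Rmax r" for l e f
    unfolding Rmax_eq_qnorm by (rule abs_le_qnorm)
  have "\<bar>r j c d + \<alpha> * val (Q k)\<bar> \<le> Rmax r + \<alpha> * X"
    using abs_triangle_ineq[of "r j c d" "\<alpha> * val (Q k)"] reward[of j c d] game_value[of k] by linarith
  then have "\<bar>\<alpha> * th * (r j c d + \<alpha> * val (Q k))\<bar> \<le> \<alpha> * th * (Rmax r + \<alpha> * X)"
    using assms(2,3) by (simp add: abs_mult mult_left_mono)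
  then have "\<bar>r i a b + \<alpha> * val (Q j) + \<alpha> * th * (r j c d + \<alpha> * val (Q k))\<bar>
      \<le> Rmax r + \<alpha> * X + \<alpha> * th * (Rmax r + \<alpha> * X)"
    using abs_triangle_ineq[of "r i a b + \<alpha> * val (Q j)"] abs_triangle_ineq[of "r i a b"]
      reward[of i a b] game_value[of j] by linarith
  then show ?thesis
    by (simp add: algebra_simps)
qed

lemma qnorm_tmql_step_le:
  fixes Q :: "'s::finite \<Rightarrow> 'a::finite \<Rightarrow> 'b::finite \<Rightarrow> real"
  assumes Q: "qnorm Q \<le> X" and "X \<le> Y" and \<beta>: "\<And>i a b. 0 \<le> \<beta> i a b \<and> \<beta> i a b \<le> 1"
    and "0 \<le> \<alpha>" and "0 \<le> th"
    and update: "\<And>i a b. (1 - \<beta> i a b) * X + \<beta> i a b * ((Rmax r + \<alpha> * X) * (1 + \<alpha> * th)) \<le> Y"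
  shows "qnorm (tmql_step r \<alpha> \<beta> Q th smp) \<le> Y"
proof -
  obtain i a b j c d k where smp: "smp = (i, a, b, j, c, d, k)"
    by (cases smp) auto
  let ?t = "r i a b + \<alpha> * val (Q j) + \<alpha> * th * (r j c d + \<alpha> * val (Q k))"
  have Qi: "\<bar>Q i' a' b'\<bar> \<le> X" for i' a' b'
    using Q by (simp add: qnorm_le_iff)
  have "\<bar>(1 - \<beta> i a b) * Q i a b\<bar> \<le> (1 - \<beta> i a b) * X"
    using \<beta>[of i a b] Qi[of i a b] by (simp add: abs_mult mult_left_mono)
  moreover have "\<bar>\<beta> i a b * ?t\<bar> \<le> \<beta> i a b * ((Rmax r + \<alpha> * X) * (1 + \<alpha> * th))"
    using \<beta>[of i a b] tmql_target_abs_le[OF assms(1,4,5), of r i a b j c d k]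
    by (simp add: abs_mult mult_left_mono)
  ultimately have "\<bar>(1 - \<beta> i a b) * Q i a b + \<beta> i a b * ?t\<bar> \<le> Y"
    using update[of i a b] abs_triangle_ineq[of "(1 - \<beta> i a b) * Q i a b"] by linarith
  with Qi assms(2) show ?thesis
    by (auto simp: qnorm_le_iff tmql_step_def smp intro: order_trans)
qed

lemma update_le_initial:
  fixes C R \<alpha> th b :: real
  assumes "0 \<le> C" and "R = C * (1 - \<alpha>)" and "0 \<le> b" "b \<le> 1" and "0 \<le> \<alpha>" "0 \<le> th"
  shows "(1 - b) * C + b * ((R + \<alpha> * C) * (1 + \<alpha> * th)) \<le> C * (1 + \<alpha> * th)"
proof -
  have "(1 - b) * C + b * ((R + \<alpha> * C) * (1 + \<alpha> * th)) = C + b * (\<alpha> * th * C)"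
    using assms(2) by (simp add: algebra_simps)
  also have "\<dots> \<le> C + 1 * (\<alpha> * th * C)"
    using assms by (intro add_left_mono mult_right_mono) auto
  finally show ?thesis by (simp add: algebra_simps)
qed

lemma update_le_growth:
  fixes K R \<alpha> th b bb :: real
  assumes "0 \<le> K" and "R * (1 + \<alpha> * th) \<le> (1 - \<alpha>) * K"
    and "0 \<le> b" "b \<le> bb" and "0 \<le> th"
  shows "(1 - b) * K + b * ((R + \<alpha> * K) * (1 + \<alpha> * th)) \<le> K * (1 + bb * th * \<alpha>^2)"
proof -
  have "(1 - b) * K + b * ((R + \<alpha> * K) * (1 + \<alpha> * th))
      = K + b * (R * (1 + \<alpha> * th) - (1 - \<alpha>) * K) + b * (th * \<alpha>^2 * K)"
    by (simp add: algebra_simps power2_eq_square)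
  also have "\<dots> \<le> K + 0 + bb * (th * \<alpha>^2 * K)"
    using assms by (intro add_mono mult_nonneg_nonpos mult_right_mono) auto
  finally show ?thesis by (simp add: algebra_simps)
qed

lemma qnorm_tmql_step_le_initial:
  fixes Q :: "'s::finite \<Rightarrow> 'a::finite \<Rightarrow> 'b::finite \<Rightarrow> real"
  assumes "qnorm Q \<le> C" and C: "0 \<le> C" "Rmax r = C * (1 - \<alpha>)"
    and \<beta>: "\<And>i a b. 0 \<le> \<beta> i a b \<and> \<beta> i a b \<le> 1" and "0 \<le> \<alpha>" and "0 \<le> th"
  shows "qnorm (tmql_step r \<alpha> \<beta> Q th smp) \<le> C * (1 + \<alpha> * th)"
proof (rule qnorm_tmql_step_le[OF assms(1) _ \<beta> assms(5,6)])
  show "C \<le> C * (1 + \<alpha> * th)"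
    using assms by (simp add: mult_le_cancel_left1)
  show "(1 - \<beta> i a b) * C + \<beta> i a b * ((Rmax r + \<alpha> * C) * (1 + \<alpha> * th)) \<le> C * (1 + \<alpha> * th)"
    for i a b
    using \<beta>[of i a b] assms(5,6) by (intro update_le_initial[OF C]) auto
qed

lemma qnorm_tmql_step_le_growth:
  fixes Q :: "'s::finite \<Rightarrow> 'a::finite \<Rightarrow> 'b::finite \<Rightarrow> real"
  assumes "qnorm Q \<le> K" and "0 \<le> K" and "Rmax r * (1 + \<alpha> * th) \<le> (1 - \<alpha>) * K"
    and \<beta>: "\<And>i a b. 0 \<le> \<beta> i a b \<and> \<beta> i a b \<le> 1" and bb: "\<And>i a b. \<beta> i a b \<le> bb"
    and "0 \<le> \<alpha>" and "0 \<le> th"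
  shows "qnorm (tmql_step r \<alpha> \<beta> Q th smp) \<le> K * (1 + bb * th * \<alpha>^2)"
proof (rule qnorm_tmql_step_le[OF assms(1) _ \<beta> assms(6,7)])
  have "0 \<le> bb"
    using \<beta> bb order_trans by blast
  then show "K \<le> K * (1 + bb * th * \<alpha>^2)"
    using assms(2,7) by (simp add: mult_le_cancel_left1)
  show "(1 - \<beta> i a b) * K + \<beta> i a b * ((Rmax r + \<alpha> * K) * (1 + \<alpha> * th))
      \<le> K * (1 + bb * th * \<alpha>^2)" for i a b
    using \<beta>[of i a b] by (intro update_le_growth[OF assms(2,3) _ bb assms(7)]) auto
qed

lemma betabar_nonneg:
  assumes "\<And>i a b. 0 \<le> \<beta> n i a b"
  shows "0 \<le> betabar (\<beta> :: nat \<Rightarrow> 's::finite \<Rightarrow> 'a::finite \<Rightarrow> 'b::finite \<Rightarrow> real) n"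
  using assms[of i a b] le_betabar[of \<beta> n i a b] by linarith

lemma tmql_qnorm_le_prod:
  fixes r :: "'s::finite \<Rightarrow> 'a::finite \<Rightarrow> 'b::finite \<Rightarrow> real"
    and Q :: "nat \<Rightarrow> 's \<Rightarrow> 'a \<Rightarrow> 'b \<Rightarrow> real"
  assumes \<alpha>: "0 \<le> \<alpha>" "\<alpha> < 1"
    and \<theta>: "\<And>n. 0 \<le> \<theta> n" and \<theta>_mono: "decseq \<theta>"
    and \<beta>: "\<And>n i a b. 0 \<le> \<beta> n i a b \<and> \<beta> n i a b \<le> 1"
    and Q0: "qnorm (Q 0) \<le> Rmax r / (1 - \<alpha>)"
    and Qstep: "\<And>n. Q (Suc n) = tmql_step r \<alpha> (\<beta> n) (Q n) (\<theta> n) (smp n)"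
  shows "qnorm (Q n) \<le> Rmax r / (1 - \<alpha>) * (1 + \<alpha> * \<theta> 0)
    * (\<Prod>m\<in>{1..<n}. 1 + betabar \<beta> m * \<theta> m * \<alpha>^2)"
proof -
  define C where "C = Rmax r / (1 - \<alpha>)"
  define K where "K n = C * (1 + \<alpha> * \<theta> 0) * (\<Prod>m\<in>{1..<n}. 1 + betabar \<beta> m * \<theta> m * \<alpha>^2)" for n
  have C: "0 \<le> C" "Rmax r = C * (1 - \<alpha>)"
    using Rmax_nonneg[of r] \<alpha> by (auto simp: C_def)
  have C_theta_nonneg: "0 \<le> C * (1 + \<alpha> * \<theta> 0)"
    using C(1) \<alpha> \<theta>[of 0] by simp
  have betabar: "0 \<le> betabar \<beta> n" for n
    using \<beta> by (intro betabar_nonneg) blast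
  have "1 \<le> (\<Prod>m\<in>{1..<n}. 1 + betabar \<beta> m * \<theta> m * \<alpha>^2)" for n
    using betabar \<theta> by (intro prod_ge_1) simp
  then have C_le_K: "C * (1 + \<alpha> * \<theta> 0) \<le> K n" for n
    using mult_left_mono[OF _ C_theta_nonneg] unfolding K_def by fastforce
  have Q1: "qnorm (Q (Suc 0)) \<le> K (Suc 0)"
    unfolding Qstep K_def using qnorm_tmql_step_le_initial[OF Q0[folded C_def] C \<beta> \<alpha>(1) \<theta>] by simp
  have Q_Suc: "qnorm (Q (Suc n)) \<le> K (Suc n)" if "1 \<le> n" "qnorm (Q n) \<le> K n" for n
  proof -
    have "\<theta> n \<le> \<theta> 0"
      using \<theta>_mono by (simp add: decseq_def)
    then have "Rmax r * (1 + \<alpha> * \<theta> n) \<le> Rmax r * (1 + \<alpha> * \<theta> 0)"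
      using \<alpha> Rmax_nonneg[of r] by (intro mult_left_mono add_left_mono) auto
    also have "\<dots> = (1 - \<alpha>) * (C * (1 + \<alpha> * \<theta> 0))"
      using C(2) by simp
    also have "\<dots> \<le> (1 - \<alpha>) * K n"
      using C_le_K \<alpha> by (intro mult_left_mono) auto
    finally have "Rmax r * (1 + \<alpha> * \<theta> n) \<le> (1 - \<alpha>) * K n" .
    then have "qnorm (Q (Suc n)) \<le> K n * (1 + betabar \<beta> n * \<theta> n * \<alpha>^2)"
      unfolding Qstep using C_theta_nonneg C_le_K[of n]
      by (intro qnorm_tmql_step_le_growth[OF that(2) _ _ \<beta> le_betabar \<alpha>(1) \<theta>]) auto
    also have "\<dots> = K (Suc n)"
      unfolding K_def using that(1) by (simp add: prod.atLeastLessThan_Suc)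
    finally show ?thesis .
  qed
  show ?thesis
  proof (cases "n = 0")
    case True
    have "C \<le> C * (1 + \<alpha> * \<theta> 0)"
      using C(1) \<alpha> \<theta>[of 0] by (simp add: mult_le_cancel_left1)
    then show ?thesis
      using Q0 True unfolding C_def[symmetric] by simp
  next
    case False
    then have "1 \<le> n" by simp
    then show ?thesis
      unfolding K_def[symmetric] C_def[symmetric]
      by (induction n rule: nat_induct_at_least) (simp_all add: Q1 Q_Suc)
  qed
qed

lemma prod_atLeast1_le_prodinf:
  fixes f :: "nat \<Rightarrow> real"
  assumes "convergent_prod (\<lambda>m. f (Suc m))" and "\<And>m. 1 \<le> f m"
  shows "(\<Prod>m\<in>{1..<n}. f m) \<le> (\<Prod>m. f (Suc m))"
proof -
  have "(\<Prod>m\<in>{1..<n}. f m) = (\<Prod>m<n - 1. f (Suc m))"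
    using prod.shift_bounds_Suc_ivl[of f 0 "n - 1"] by (cases n) (simp_all add: atLeast0LessThan)
  also have "\<dots> \<le> (\<Prod>m. f (Suc m))"
    using assms by (intro prod_le_prodinf)
      (auto simp: convergent_prod_has_prod_iff intro: order_trans[OF zero_le_one])
  finally show ?thesis .
qed

theorem mainTheorem1:
  fixes p :: "'s::finite \<Rightarrow> 'a::finite \<Rightarrow> 'b::finite \<Rightarrow> 's \<Rightarrow> real"
    and r :: "'s \<Rightarrow> 'a \<Rightarrow> 'b \<Rightarrow> real"
    and \<alpha> :: real
    and \<theta> :: "nat \<Rightarrow> real"
    and \<beta> :: "nat \<Rightarrow> 's \<Rightarrow> 'a \<Rightarrow> 'b \<Rightarrow> real"
    and smp :: "nat \<Rightarrow> 's \<times> 'a \<times> 'b \<times> 's \<times> 'a \<times> 'b \<times> 's"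
    and Q :: "nat \<Rightarrow> 's \<Rightarrow> 'a \<Rightarrow> 'b \<Rightarrow> real"
  assumes p_nonneg: "\<And>i a b j. 0 \<le> p i a b j"
    and p_sum: "\<And>i a b. (\<Sum>j\<in>UNIV. p i a b j) = 1"
    and alpha: "0 \<le> \<alpha>" "\<alpha> < 1"
    and theta_bounds: "\<And>n. 0 \<le> \<theta> n \<and> \<theta> n \<le> 1"
    and theta_mono: "decseq \<theta>"
    and theta_lim: "\<theta> \<longlonglongrightarrow> 0"
    and beta_bounds: "\<And>n i a b. 0 \<le> \<beta> n i a b \<and> \<beta> n i a b \<le> 1"
    and summable: "summable (\<lambda>n. betabar \<beta> n * \<theta> n)"
    and sample_j: "\<And>n i a b j c d k. smp n = (i, a, b, j, c, d, k) \<Longrightarrow> 0 < p i a b j"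
    and sample_k: "\<And>n i a b j c d k. smp n = (i, a, b, j, c, d, k) \<Longrightarrow> 0 < p j c d k"
    and Q0: "qnorm (Q 0) \<le> Rmax r / (1 - \<alpha>)"
    and Qstep: "\<And>n. Q (Suc n) = tmql_step r \<alpha> (\<beta> n) (Q n) (\<theta> n) (smp n)"
  shows "convergent_prod (\<lambda>m. 1 + betabar \<beta> (Suc m) * \<theta> (Suc m) * \<alpha>^2)
    \<and> (\<forall>n. qnorm (Q n)
           \<le> Rmax r / (1 - \<alpha>) * (1 + \<alpha> * \<theta> 0)
               * (\<Prod>m\<in>{1..<n}. 1 + betabar \<beta> m * \<theta> m * \<alpha>^2)
         \<and> Rmax r / (1 - \<alpha>) * (1 + \<alpha> * \<theta> 0)
               * (\<Prod>m\<in>{1..<n}. 1 + betabar \<beta> m * \<theta> m * \<alpha>^2)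
           \<le> Rmax r / (1 - \<alpha>) * (1 + \<alpha> * \<theta> 0)
               * (\<Prod>m. 1 + betabar \<beta> (Suc m) * \<theta> (Suc m) * \<alpha>^2))"
proof -
  define g where "g m = 1 + betabar \<beta> m * \<theta> m * \<alpha>^2" for m
  have increment_nonneg: "0 \<le> betabar \<beta> m * \<theta> m * \<alpha>^2" for m
    using betabar_nonneg[of \<beta> m] beta_bounds theta_bounds by (simp add: conjunct1)
  have "summable (\<lambda>m. betabar \<beta> (Suc m) * \<theta> (Suc m) * \<alpha>^2)"
    using summable_mult2[OF summable, of "\<alpha>^2"]
      summable_Suc_iff[of "\<lambda>m. betabar \<beta> m * \<theta> m * \<alpha>^2"] by simp
  then have "summable (\<lambda>m. \<bar>betabar \<beta> (Suc m) * \<theta> (Suc m) * \<alpha>^2\<bar>)"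
    using increment_nonneg by simp
  moreover have "betabar \<beta> (Suc m) * \<theta> (Suc m) * \<alpha>^2 \<noteq> -1" for m
    using increment_nonneg[of "Suc m"] by linarith
  ultimately have prod: "convergent_prod (\<lambda>m. g (Suc m))"
    unfolding g_def by (rule summable_imp_convergent_prod_real)
  have const: "0 \<le> Rmax r / (1 - \<alpha>) * (1 + \<alpha> * \<theta> 0)"
    using Rmax_nonneg[of r] alpha theta_bounds[of 0] by simp
  have "(\<Prod>m\<in>{1..<n}. g m) \<le> (\<Prod>m. g (Suc m))" for n
    using prod increment_nonneg by (intro prod_atLeast1_le_prodinf) (auto simp: g_def)
  then have partial_le_infinite:
    "Rmax r / (1 - \<alpha>) * (1 + \<alpha> * \<theta> 0) * (\<Prod>m\<in>{1..<n}. g m)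
      \<le> Rmax r / (1 - \<alpha>) * (1 + \<alpha> * \<theta> 0) * (\<Prod>m. g (Suc m))" for n
    using const by (rule mult_left_mono)
  show ?thesis
    using prod partial_le_infinite theta_bounds
      tmql_qnorm_le_prod[OF alpha _ theta_mono beta_bounds Q0 Qstep]
    unfolding g_def by blast
qed

end
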